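(* There is a constant $c$ such that for all terms $t,u$, if $t\to^*_X u$ where $X=\{(\mathrm{R3}^{\mathfrak n}),(\mathrm{R4}),(\mathrm{R7}),(\mathrm{R6}),(\mathrm{R8})\}$, then the number of steps of the reduction sequence is at most $c\cdot|t|$, i.e. it is $O(|t|)$.
   Context: SYNTAX. Fix a finite set $\mathcal F$ of function symbols, each with an arity, containing a binary symbol for multiplication, written infix $t\cdot u$. Variables are annotated: an exponential variable $x^{!A}$ ($A$ a type) or a linear variable $x^{\mathsf R}$. Values: $v::=x\mid \underline r\ (r\in\mathbb R)\mid \lambda x.t\mid\langle v_1,v_2\rangle$ (the $\underline r$ are numerals). Terms: $t,u::=v\mid tu\mid\langle t,u\rangle\mid t[\langle x,y\rangle\leftarrow u]\mid t[x\leftarrow u]\mid t+u\mid f(t_1,\dots,t_k)$ with $f\in\mathcal F$ of arity $k$. $\lambda x.t$ binds $x$ in $t$; the explicit substitution $t[x\leftarrow u]$ binds $x$ in $t$; $t[\langle x,y\rangle\leftarrow u]$ binds $x,y$ in $t$. Terms are up to $\alpha$-equivalence; $\mathrm{fv}(t)$ is the set of free variables. $|t|$ (size) is the number of symbols occurring in $t$. REDUCTION. A (one-hole) context $\mathsf C$ is a term with one occurrence of a hole $\{\cdot\}$; $\mathsf C\{t\}$ fills it, possibly capturing variables. A substitution context is $\alpha=\{\cdot\}[p_1\leftarrow t_1]\cdots[p_n\leftarrow t_n]$ ($n\ge0$, each $p_i$ a variable or a pair of variables); $t\alpha$ denotes $\alpha\{t\}$. The rules: (R3$^{\mathfrak n}$)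 $\mathsf C\{x\}[x^{!A}\leftarrow \underline r\alpha]\to\mathsf C\{\underline r\}[x^{!A}\leftarrow \underline r]\alpha$ for $\mathsf C$ not binding $x$ and $\underline r$ a numeral; (R4) $t[x^{!A}\leftarrow v\alpha]\to t\alpha$ if $v$ is a value and $x\notin\mathrm{fv}(t)$; (R6) $\underline r\alpha+\underline q\beta\to\underline{r+q}\,\alpha\beta$; (R7) $\langle t_1,t_2\rangle\alpha+\langle u_1,u_2\rangle\beta\to\langle t_1+u_1,t_2+u_2\rangle\alpha\beta$; (R8) $\underline r\alpha\cdot\underline q\beta\to\underline{rq}\,\alpha\beta$. For a set $X$ of rules, $\to_X$ is the closure under all contexts of the union of the rules in $X$, and $\to^*_X$ its reflexive–transitive closure. *)

theory Defs
  imports Complex_Main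
begin

text \<open>Terms with de Bruijn indices (terms are taken up to alpha-equivalence).
  Variable annotations live on binders.  'ty is the type of types A, 'f the
  type of function symbols.\<close>

datatype 'ty ann = Exc 'ty | Lin

datatype ('ty, 'f) trm =
    Var nat
  | Num real
  | Lam "'ty ann" "('ty, 'f) trm"
  | App "('ty, 'f) trm" "('ty, 'f) trm"
  | Pr "('ty, 'f) trm" "('ty, 'f) trm"
  | LetPr "'ty ann" "'ty ann" "('ty, 'f) trm" "('ty, 'f) trm"
    \<comment> \<open>LetPr A B t u = t[<x,y> <- u]; in t, index 1 is x and index 0 is y\<close>
  | ES "'ty ann" "('ty, 'f) trm" "('ty, 'f) trm"
    \<comment> \<open>ES A t u = t[x <- u]; in t, index 0 is x\<close>
  | Plus "('ty, 'f) trm" "('ty, 'f) trm"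
  | Fn 'f "('ty, 'f) trm list"

fun tsize :: "('ty, 'f) trm \<Rightarrow> nat" where
  "tsize (Var i) = 1"
| "tsize (Num r) = 1"
| "tsize (Lam A t) = 2 + tsize t"
| "tsize (App t u) = 1 + tsize t + tsize u"
| "tsize (Pr t u) = 1 + tsize t + tsize u"
| "tsize (LetPr A B t u) = 3 + tsize t + tsize u"
| "tsize (ES A t u) = 2 + tsize t + tsize u"
| "tsize (Plus t u) = 1 + tsize t + tsize u"
| "tsize (Fn f ts) = 1 + sum_list (map tsize ts)"

fun wf_trm :: "'f set \<Rightarrow> ('f \<Rightarrow> nat) \<Rightarrow> ('ty, 'f) trm \<Rightarrow> bool" where
  "wf_trm F ar (Var i) = True"
| "wf_trm F ar (Num r) = True"
| "wf_trm F ar (Lam A t) = wf_trm F ar t"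
| "wf_trm F ar (App t u) = (wf_trm F ar t \<and> wf_trm F ar u)"
| "wf_trm F ar (Pr t u) = (wf_trm F ar t \<and> wf_trm F ar u)"
| "wf_trm F ar (LetPr A B t u) = (wf_trm F ar t \<and> wf_trm F ar u)"
| "wf_trm F ar (ES A t u) = (wf_trm F ar t \<and> wf_trm F ar u)"
| "wf_trm F ar (Plus t u) = (wf_trm F ar t \<and> wf_trm F ar u)"
| "wf_trm F ar (Fn f ts) = (f \<in> F \<and> length ts = ar f \<and> (\<forall>t\<in>set ts. wf_trm F ar t))"

fun is_value :: "('ty, 'f) trm \<Rightarrow> bool" where
  "is_value (Var i) = True"
| "is_value (Num r) = True"
| "is_value (Lam A t) = True"
| "is_value (Pr v w) = (is_value v \<and> is_value w)"
| "is_value _ = False"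

fun lift :: "nat \<Rightarrow> nat \<Rightarrow> ('ty, 'f) trm \<Rightarrow> ('ty, 'f) trm" where
  "lift k c (Var i) = (if c \<le> i then Var (i + k) else Var i)"
| "lift k c (Num r) = Num r"
| "lift k c (Lam A t) = Lam A (lift k (Suc c) t)"
| "lift k c (App t u) = App (lift k c t) (lift k c u)"
| "lift k c (Pr t u) = Pr (lift k c t) (lift k c u)"
| "lift k c (LetPr A B t u) = LetPr A B (lift k (c + 2) t) (lift k c u)"
| "lift k c (ES A t u) = ES A (lift k (Suc c) t) (lift k c u)"
| "lift k c (Plus t u) = Plus (lift k c t) (lift k c u)"
| "lift k c (Fn f ts) = Fn f (map (lift k c) ts)"

text \<open>lower c t: remove the (unused) index c, decrementing indices > c.\<close>
fun lower :: "nat \<Rightarrow> ('ty, 'f) trm \<Rightarrow> ('ty, 'f) trm" where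
  "lower c (Var i) = (if c < i then Var (i - 1) else Var i)"
| "lower c (Num r) = Num r"
| "lower c (Lam A t) = Lam A (lower (Suc c) t)"
| "lower c (App t u) = App (lower c t) (lower c u)"
| "lower c (Pr t u) = Pr (lower c t) (lower c u)"
| "lower c (LetPr A B t u) = LetPr A B (lower (c + 2) t) (lower c u)"
| "lower c (ES A t u) = ES A (lower (Suc c) t) (lower c u)"
| "lower c (Plus t u) = Plus (lower c t) (lower c u)"
| "lower c (Fn f ts) = Fn f (map (lower c) ts)"

fun occurs :: "nat \<Rightarrow> ('ty, 'f) trm \<Rightarrow> bool" where
  "occurs c (Var i) = (i = c)"
| "occurs c (Num r) = False"
| "occurs c (Lam A t) = occurs (Suc c) t"
| "occurs c (App t u) = (occurs c t \<or> occurs c u)"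
| "occurs c (Pr t u) = (occurs c t \<or> occurs c u)"
| "occurs c (LetPr A B t u) = (occurs (c + 2) t \<or> occurs c u)"
| "occurs c (ES A t u) = (occurs (Suc c) t \<or> occurs c u)"
| "occurs c (Plus t u) = (occurs c t \<or> occurs c u)"
| "occurs c (Fn f ts) = (\<exists>t\<in>set ts. occurs c t)"

text \<open>Substitution contexts, listed outermost binder first:
  plug [a1,...,an] t = t[p_n <- t_n]...[p_1 <- t_1] is written with a1 outermost.\<close>
datatype ('ty, 'f) sitem = SV "'ty ann" "('ty, 'f) trm" | SP "'ty ann" "'ty ann" "('ty, 'f) trm"

fun plug :: "('ty, 'f) sitem list \<Rightarrow> ('ty, 'f) trm \<Rightarrow> ('ty, 'f) trm" where
  "plug [] t = t"
| "plug (SV A u # as) t = ES A (plug as t) u"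
| "plug (SP A B u # as) t = LetPr A B (plug as t) u"

fun nb :: "('ty, 'f) sitem \<Rightarrow> nat" where
  "nb (SV A u) = 1"
| "nb (SP A B u) = 2"

definition nbs :: "('ty, 'f) sitem list \<Rightarrow> nat" where
  "nbs as = sum_list (map nb as)"

fun lift_item :: "nat \<Rightarrow> nat \<Rightarrow> ('ty, 'f) sitem \<Rightarrow> ('ty, 'f) sitem" where
  "lift_item k c (SV A u) = SV A (lift k c u)"
| "lift_item k c (SP A B u) = SP A B (lift k c u)"

fun lift_ctx :: "nat \<Rightarrow> nat \<Rightarrow> ('ty, 'f) sitem list \<Rightarrow> ('ty, 'f) sitem list" where
  "lift_ctx k c [] = []"
| "lift_ctx k c (a # as) = lift_item k c a # lift_ctx k (c + nb a) as"

text \<open>hole_num r k t t': t' is t with one free occurrence of index k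
  (the variable x, seen at the root of t as index k) replaced by the numeral r;
  i.e. t = C{x}, t' = C{r} for a context C not binding x.\<close>
inductive hole_num :: "real \<Rightarrow> nat \<Rightarrow> ('ty, 'f) trm \<Rightarrow> ('ty, 'f) trm \<Rightarrow> bool" where
  "hole_num r k (Var k) (Num r)"
| "hole_num r (Suc k) t t' \<Longrightarrow> hole_num r k (Lam A t) (Lam A t')"
| "hole_num r k t t' \<Longrightarrow> hole_num r k (App t u) (App t' u)"
| "hole_num r k u u' \<Longrightarrow> hole_num r k (App t u) (App t u')"
| "hole_num r k t t' \<Longrightarrow> hole_num r k (Pr t u) (Pr t' u)"
| "hole_num r k u u' \<Longrightarrow> hole_num r k (Pr t u) (Pr t u')"
| "hole_num r (k + 2) t t' \<Longrightarrow> hole_num r k (LetPr A B t u) (LetPr A B t' u)"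
| "hole_num r k u u' \<Longrightarrow> hole_num r k (LetPr A B t u) (LetPr A B t u')"
| "hole_num r (Suc k) t t' \<Longrightarrow> hole_num r k (ES A t u) (ES A t' u)"
| "hole_num r k u u' \<Longrightarrow> hole_num r k (ES A t u) (ES A t u')"
| "hole_num r k t t' \<Longrightarrow> hole_num r k (Plus t u) (Plus t' u)"
| "hole_num r k u u' \<Longrightarrow> hole_num r k (Plus t u) (Plus t u')"
| "hole_num r k t t' \<Longrightarrow> hole_num r k (Fn f (xs @ t # ys)) (Fn f (xs @ t' # ys))"

text \<open>Root rules R3n, R4, R6, R7, R8 (mul is the multiplication symbol).
  In t alpha beta, alpha is inner and beta outer, so the binders of beta now
  scope over the terms of alpha (shifted accordingly).\<close>
inductive root_X :: "'f \<Rightarrow> ('ty, 'f) trm \<Rightarrow> ('ty, 'f) trm \<Rightarrow> bool" for mul where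
  R3n: "hole_num r 0 t t' \<Longrightarrow>
    root_X mul (ES (Exc A) t (plug \<alpha> (Num r)))
               (plug \<alpha> (ES (Exc A) (lift (nbs \<alpha>) 1 t') (Num r)))"
| R4: "is_value v \<Longrightarrow> \<not> occurs 0 t \<Longrightarrow>
    root_X mul (ES (Exc A) t (plug \<alpha> v)) (plug \<alpha> (lift (nbs \<alpha>) 0 (lower 0 t)))"
| R6: "root_X mul (Plus (plug \<alpha> (Num r)) (plug \<beta> (Num q)))
               (plug (\<beta> @ lift_ctx (nbs \<beta>) 0 \<alpha>) (Num (r + q)))"
| R7: "root_X mul (Plus (plug \<alpha> (Pr t1 t2)) (plug \<beta> (Pr u1 u2)))
               (plug (\<beta> @ lift_ctx (nbs \<beta>) 0 \<alpha>)
                  (Pr (Plus (lift (nbs \<beta>) (nbs \<alpha>) t1) (lift (nbs \<alpha>) 0 u1))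
                      (Plus (lift (nbs \<beta>) (nbs \<alpha>) t2) (lift (nbs \<alpha>) 0 u2))))"
| R8: "root_X mul (Fn mul [plug \<alpha> (Num r), plug \<beta> (Num q)])
               (plug (\<beta> @ lift_ctx (nbs \<beta>) 0 \<alpha>) (Num (r * q)))"

inductive red_X :: "'f \<Rightarrow> ('ty, 'f) trm \<Rightarrow> ('ty, 'f) trm \<Rightarrow> bool" for mul where
  root: "root_X mul t t' \<Longrightarrow> red_X mul t t'"
| "red_X mul t t' \<Longrightarrow> red_X mul (Lam A t) (Lam A t')"
| "red_X mul t t' \<Longrightarrow> red_X mul (App t u) (App t' u)"
| "red_X mul u u' \<Longrightarrow> red_X mul (App t u) (App t u')"
| "red_X mul t t' \<Longrightarrow> red_X mul (Pr t u) (Pr t' u)"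
| "red_X mul u u' \<Longrightarrow> red_X mul (Pr t u) (Pr t u')"
| "red_X mul t t' \<Longrightarrow> red_X mul (LetPr A B t u) (LetPr A B t' u)"
| "red_X mul u u' \<Longrightarrow> red_X mul (LetPr A B t u) (LetPr A B t u')"
| "red_X mul t t' \<Longrightarrow> red_X mul (ES A t u) (ES A t' u)"
| "red_X mul u u' \<Longrightarrow> red_X mul (ES A t u) (ES A t u')"
| "red_X mul t t' \<Longrightarrow> red_X mul (Plus t u) (Plus t' u)"
| "red_X mul u u' \<Longrightarrow> red_X mul (Plus t u) (Plus t u')"
| "red_X mul t t' \<Longrightarrow> red_X mul (Fn f (xs @ t # ys)) (Fn f (xs @ t' # ys))"

end

theory Submission
  imports Defs
begin

text \<open>Every step of the reduction strictly decreases a weight that is at most twice the size.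
  The weight is the size, except that variables and pairs count one symbol more: R3n replaces
  a variable by a numeral, R7 turns one sum into two sums but consumes a pair, and R4, R6, R8
  delete symbols outright. Lifting, lowering and shuffling substitution contexts do not change
  the weight.\<close>

fun weight :: "('ty, 'f) trm \<Rightarrow> nat" where
  "weight (Var i) = 2"
| "weight (Num r) = 1"
| "weight (Lam A t) = 2 + weight t"
| "weight (App t u) = 1 + weight t + weight u"
| "weight (Pr t u) = 2 + weight t + weight u"
| "weight (LetPr A B t u) = 3 + weight t + weight u"
| "weight (ES A t u) = 2 + weight t + weight u"
| "weight (Plus t u) = 1 + weight t + weight u"
| "weight (Fn f ts) = 1 + sum_list (map weight ts)"

fun ctx_weight :: "('ty, 'f) sitem list \<Rightarrow> nat" where
  "ctx_weight [] = 0"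
| "ctx_weight (SV A u # as) = 2 + weight u + ctx_weight as"
| "ctx_weight (SP A B u # as) = 3 + weight u + ctx_weight as"

lemma weight_le_tsize: "weight t \<le> 2 * tsize t"
proof (induction t)
  case (Fn f ts)
  then have "sum_list (map weight ts) \<le> sum_list (map (\<lambda>t. 2 * tsize t) ts)"
    by (intro sum_list_mono) simp
  then show ?case
    by (simp add: sum_list_const_mult)
qed auto

lemma weight_lift [simp]: "weight (lift k c t) = weight t"
  by (induction t arbitrary: c) (auto intro: arg_cong[where f = sum_list])

lemma weight_lower [simp]: "weight (lower c t) = weight t"
  by (induction t arbitrary: c) (auto intro: arg_cong[where f = sum_list])

lemma weight_plug [simp]: "weight (plug as t) = ctx_weight as + weight t"
  by (induction as t rule: plug.induct) auto

lemma ctx_weight_lift_ctx [simp]: "ctx_weight (lift_ctx k c as) = ctx_weight as"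
proof (induction as arbitrary: c)
  case (Cons a as)
  then show ?case by (cases a) auto
qed simp

lemma ctx_weight_append [simp]: "ctx_weight (as @ bs) = ctx_weight as + ctx_weight bs"
proof (induction as)
  case (Cons a as)
  then show ?case by (cases a) auto
qed simp

lemma weight_hole_num_less: "hole_num r k t t' \<Longrightarrow> weight t' < weight t"
  by (induction rule: hole_num.induct) auto

lemma root_X_weight_less: "root_X mul t u \<Longrightarrow> weight u < weight t"
  by (induction rule: root_X.induct) (auto dest: weight_hole_num_less)

lemma red_X_weight_less: "red_X mul t u \<Longrightarrow> weight u < weight t"
  by (induction rule: red_X.induct) (auto dest: root_X_weight_less)

lemma relpowp_length_le_measure:
  fixes f :: "'a \<Rightarrow> nat"
  assumes decreasing: "\<And>x y. r x y \<Longrightarrow> f y < f x"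
  shows "(r ^^ n) x y \<Longrightarrow> n + f y \<le> f x"
proof (induction n arbitrary: y)
  case (Suc n)
  then obtain z where "(r ^^ n) x z" and "r z y"
    by auto
  with Suc.IH[of z] decreasing[of z y] show ?case
    by simp
qed simp

theorem lemma4p6:
  fixes F :: "'f set" and ar :: "'f \<Rightarrow> nat" and mul :: 'f
  assumes "finite F" and "mul \<in> F" and "ar mul = 2"
  shows "\<exists>c::nat. \<forall>(t :: ('ty, 'f) trm) u n.
           wf_trm F ar t \<longrightarrow> (red_X mul ^^ n) t u \<longrightarrow> n \<le> c * tsize t"
proof (intro exI[of _ 2] allI impI)
  fix t :: "('ty, 'f) trm" and u n
  assume "(red_X mul ^^ n) t u"
  then have "n + weight u \<le> weight t"
    by (metis relpowp_length_le_measure red_X_weight_less)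
  with weight_le_tsize[of t] show "n \<le> 2 * tsize t"
    by simp
qed

end
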